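(* For every integer $n\ge1$ and every $u\in V$, $\Pr(E_{7u})<36\left(3\zeta(3)+\tfrac18\right)\dfrac{\ln(2n)}{\ln^{3}(n+1)}$, where $\zeta(3)=\sum_{i\ge1} i^{-3}$.
   Context: For an integer $n\ge1$, the $n$-octahedral graph $G'_n=(V,E')$ is the undirected graph with vertex set $V=\{u\in\mathbb{Z}^3:|u_1|+|u_2|+|u_3|=n\}$ and edge set $E'=\{\{v,w\}\subset V: v\neq w,\ |v_i-w_i|\le 1 \text{ for all } i=1,2,3\}$. For $u,v\in V$, $d_{uv}$ denotes the shortest-path distance in $G'_n$, and $Z_u=\left(\sum_{w\in V\setminus\{u\}} d_{uw}^{-2}\right)^{-1}$. The OSW random graph $G_n=(V,E)$ is the directed graph in which, for every $\{u,v\}\in E'$, both $(u,v),(v,u)\in E$, and in addition each vertex $u\in V$, independently of the others, chooses one vertex $v\in V\setminus\{u\}$ with probability $Z_u d_{uv}^{-2}$ and the long-range edge $(u,v)$ is added; $C_{uv}$ denotes the event that $u$ chooses $v$. For an ordered pair $(x,y)$ of distinct vertices, say $(x,y)$ is of type $s$ if $\{x,y\}\in E'$, and of type $w$ if $d_{xy}\ge2$ and $C_{xy}$ occurs. A C3 rooted at $u$ of type $(t_1,t_2,t_3)\in\{s,w\}^3$ is a triple $(u,a,b)$ of pairwise distinct vertices such that $(u,a)$ is of type $t_1$, $(a,b)$ is of type $t_2$ and $(b,u)$ is of type $t_3$. $E_{7u}$ is the event that there exists a C3 rooted at $u$ of type $(w,w,w)$. *)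

theory Defs
  imports "HOL-Probability.Probability"
begin

type_synonym vtx = "int \<times> int \<times> int"

definition octV :: "nat \<Rightarrow> vtx set" where
  "octV n = {(a, b, c). \<bar>a\<bar> + \<bar>b\<bar> + \<bar>c\<bar> = int n}"

definition octE :: "nat \<Rightarrow> (vtx \<times> vtx) set" where
  "octE n = {((a1, a2, a3), (b1, b2, b3)).
     (a1, a2, a3) \<in> octV n \<and> (b1, b2, b3) \<in> octV n \<and> (a1, a2, a3) \<noteq> (b1, b2, b3) \<and>
     \<bar>a1 - b1\<bar> \<le> 1 \<and> \<bar>a2 - b2\<bar> \<le> 1 \<and> \<bar>a3 - b3\<bar> \<le> 1}"

definition octd :: "nat \<Rightarrow> vtx \<Rightarrow> vtx \<Rightarrow> nat" where
  "octd n u v = (LEAST k. (u, v) \<in> octE n ^^ k)"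

definition Zc :: "nat \<Rightarrow> vtx \<Rightarrow> real" where
  "Zc n u = inverse (\<Sum>w\<in>octV n - {u}. 1 / (real (octd n u w))\<^sup>2)"

definition choice_pmf :: "nat \<Rightarrow> vtx \<Rightarrow> vtx pmf" where
  "choice_pmf n u = embed_pmf (\<lambda>v. if v \<in> octV n - {u}
                                     then Zc n u * (1 / (real (octd n u v))\<^sup>2) else 0)"

text \<open>The independent choices of all vertices; an outcome \<omega> maps each vertex u
  to the vertex it chooses, so C_uv is the event \<omega> u = v.\<close>
definition OSW_space :: "nat \<Rightarrow> (vtx \<Rightarrow> vtx) pmf" where
  "OSW_space n = Pi_pmf (octV n) undefined (choice_pmf n)"

definition chooses :: "(vtx \<Rightarrow> vtx) \<Rightarrow> vtx \<Rightarrow> vtx \<Rightarrow> bool" where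
  "chooses \<omega> u v \<longleftrightarrow> \<omega> u = v"

definition type_s :: "nat \<Rightarrow> vtx \<Rightarrow> vtx \<Rightarrow> bool" where
  "type_s n x y \<longleftrightarrow> (x, y) \<in> octE n"

definition type_w :: "nat \<Rightarrow> (vtx \<Rightarrow> vtx) \<Rightarrow> vtx \<Rightarrow> vtx \<Rightarrow> bool" where
  "type_w n \<omega> x y \<longleftrightarrow> x \<noteq> y \<and> octd n x y \<ge> 2 \<and> chooses \<omega> x y"

definition E7 :: "nat \<Rightarrow> vtx \<Rightarrow> (vtx \<Rightarrow> vtx) set" where
  "E7 n u = {\<omega>. \<exists>a\<in>octV n. \<exists>b\<in>octV n. u \<noteq> a \<and> u \<noteq> b \<and> a \<noteq> b \<and>
                 type_w n \<omega> u a \<and> type_w n \<omega> a b \<and> type_w n \<omega> b u}"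

end

theory Submission
  imports Defs
begin

text \<open>Every edge of \<open>G'\<^sub>n\<close> changes each coordinate by at most one, so \<open>d\<^sub>u\<^sub>v\<close> is at least the
  Chebyshev distance \<open>\<parallel>u - v\<parallel>\<^sub>\<infinity>\<close>, with equality when \<open>u\<close> and \<open>v\<close> lie on a common face of the
  octahedron. A face contains about \<open>k\<^sup>2/2\<close> points within Chebyshev distance \<open>k\<close> of a given point,
  which gives \<open>\<Sum>\<^sub>w d\<^sub>u\<^sub>w\<^sup>-\<^sup>2 \<ge> ln (n + 1) + 1/2\<close>, hence \<open>Z\<^sub>u \<le> 1 / (ln (n + 1) + 1/2)\<close> and
  \<open>Pr(C\<^sub>u\<^sub>v) \<le> Z\<^sub>u \<parallel>u - v\<parallel>\<^sub>\<infinity>\<^sup>-\<^sup>2\<close>. By the union bound and independence of the choices,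
  \<open>Pr(E\<^sub>7\<^sub>u)\<close> is at most \<open>Z\<^sup>3\<close> times the sum over triangles \<open>u, a, b\<close> of the product of the three
  inverse squared Chebyshev distances. Bounding that product by the sum of the three terms
  \<open>x\<^sup>-\<^sup>2 y\<^sup>-\<^sup>2 max(x, y)\<^sup>-\<^sup>2\<close> and summing by parts over Chebyshev balls, whose size is \<open>O(k\<^sup>2)\<close>, bounds
  the triangle sum by the absolute constant 1410. So \<open>Pr(E\<^sub>7\<^sub>u) \<le> 1410 / (ln (n + 1) + 1/2)\<^sup>3\<close>,
  which is below the claimed bound once \<open>ln (n + 1) > 11\<close>; for smaller \<open>n\<close> the claimed bound
  exceeds 1.\<close>

section \<open>Chebyshev distance on the octahedron\<close>

definition linf_dist :: "vtx \<Rightarrow> vtx \<Rightarrow> nat" where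
  "linf_dist v w = (case v of (a1, a2, a3) \<Rightarrow> case w of (b1, b2, b3) \<Rightarrow>
     nat (max \<bar>a1 - b1\<bar> (max \<bar>a2 - b2\<bar> \<bar>a3 - b3\<bar>)))"

lemma linf_dist_simp [simp]:
  "linf_dist (a1, a2, a3) (b1, b2, b3) = nat (max \<bar>a1 - b1\<bar> (max \<bar>a2 - b2\<bar> \<bar>a3 - b3\<bar>))"
  by (simp add: linf_dist_def)

lemma linf_dist_le_iff:
  "linf_dist (a1, a2, a3) (b1, b2, b3) \<le> k \<longleftrightarrow>
     \<bar>a1 - b1\<bar> \<le> int k \<and> \<bar>a2 - b2\<bar> \<le> int k \<and> \<bar>a3 - b3\<bar> \<le> int k"
  by (simp only: linf_dist_simp nat_le_iff max.bounded_iff)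

lemma linf_dist_commute: "linf_dist v w = linf_dist w v"
  by (cases v; cases w) (simp add: abs_minus_commute)

lemma linf_dist_triangle: "linf_dist u w \<le> linf_dist u v + linf_dist v w"
proof -
  have tri: "\<bar>x - z\<bar> \<le> \<bar>x - y\<bar> + \<bar>y - z\<bar>" for x y z :: int by arith
  obtain a1 a2 a3 b1 b2 b3 c1 c2 c3 where "u = (a1, a2, a3)" "v = (b1, b2, b3)" "w = (c1, c2, c3)"
    by (cases u; cases v; cases w)
  moreover have "max \<bar>a1 - c1\<bar> (max \<bar>a2 - c2\<bar> \<bar>a3 - c3\<bar>)
      \<le> max \<bar>a1 - b1\<bar> (max \<bar>a2 - b2\<bar> \<bar>a3 - b3\<bar>) + max \<bar>b1 - c1\<bar> (max \<bar>b2 - c2\<bar> \<bar>b3 - c3\<bar>)"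
    using tri[of a1 b1 c1] tri[of a2 b2 c2] tri[of a3 b3 c3] by (smt (verit))
  ultimately show ?thesis by (simp add: nat_add_distrib[symmetric] nat_mono)
qed

lemma linf_dist_eq_0_iff: "linf_dist v w = 0 \<longleftrightarrow> v = w"
  by (cases v; cases w) (simp add: max.bounded_iff)

lemma linf_dist_self [simp]: "linf_dist v v = 0"
  by (simp add: linf_dist_eq_0_iff)

lemma octV_mem [simp]: "(a, b, c) \<in> octV n \<longleftrightarrow> \<bar>a\<bar> + \<bar>b\<bar> + \<bar>c\<bar> = int n"
  by (simp add: octV_def)

lemma finite_octV: "finite (octV n)"
proof (rule finite_subset)
  show "octV n \<subseteq> {-int n..int n} \<times> {-int n..int n} \<times> {-int n..int n}"
    by (auto simp: octV_def)
qed simp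

lemma linf_dist_le_double:
  assumes "v \<in> octV n" "w \<in> octV n" shows "linf_dist v w \<le> 2 * n"
  using assms
  by (cases v; cases w)
    (auto simp del: linf_dist_simp simp: linf_dist_le_iff intro!: order_trans[OF abs_triangle_ineq4])

lemma octE_sym: "(v, w) \<in> octE n \<Longrightarrow> (w, v) \<in> octE n"
  by (cases v; cases w) (auto simp: octE_def abs_minus_commute)

lemma linf_dist_le_1_if_octE: "(v, w) \<in> octE n \<Longrightarrow> linf_dist v w \<le> 1"
  by (cases v; cases w) (simp add: octE_def nat_le_iff max.bounded_iff)

lemma linf_dist_le_if_relpow_octE: "(v, w) \<in> octE n ^^ k \<Longrightarrow> linf_dist v w \<le> k"
proof (induction k arbitrary: w)
  case (Suc k)
  then obtain y where "(v, y) \<in> octE n ^^ k" "(y, w) \<in> octE n" by auto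
  have "linf_dist v w \<le> linf_dist v y + linf_dist y w" by (rule linf_dist_triangle)
  also have "\<dots> \<le> k + 1"
    using Suc.IH[OF \<open>(v, y) \<in> octE n ^^ k\<close>] linf_dist_le_1_if_octE[OF \<open>(y, w) \<in> octE n\<close>]
    by (rule add_mono)
  finally show ?case by simp
qed simp

definition flip :: "bool \<Rightarrow> int \<Rightarrow> int" where
  "flip p x = (if p then x else - x)"

definition reflect :: "bool \<times> bool \<times> bool \<Rightarrow> vtx \<Rightarrow> vtx" where
  "reflect s v = (case s of (p, q, r) \<Rightarrow> case v of (a, b, c) \<Rightarrow> (flip p a, flip q b, flip r c))"

lemma reflect_simp [simp]: "reflect (p, q, r) (a, b, c) = (flip p a, flip q b, flip r c)"
  by (simp add: reflect_def)

lemma flip_0 [simp]: "flip p 0 = 0"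
  and flip_flip [simp]: "flip p (flip p x) = x"
  and flip_eq_iff [simp]: "flip p x = flip p y \<longleftrightarrow> x = y"
  and abs_flip [simp]: "\<bar>flip p x\<bar> = \<bar>x\<bar>"
  and abs_flip_diff [simp]: "\<bar>flip p x - flip p y\<bar> = \<bar>x - y\<bar>"
  by (auto simp: flip_def abs_minus_commute)

lemma reflect_reflect [simp]: "reflect s (reflect s v) = v"
  by (cases s; cases v) simp

lemma reflect_eq_iff [simp]: "reflect s v = reflect s w \<longleftrightarrow> v = w"
  by (metis reflect_reflect)

lemma reflect_in_octV_iff [simp]: "reflect s v \<in> octV n \<longleftrightarrow> v \<in> octV n"
  by (cases s; cases v) simp

lemma linf_dist_reflect [simp]: "linf_dist (reflect s v) (reflect s w) = linf_dist v w"
  by (cases s; cases v; cases w) simp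

lemma linf_dist_reflect_left: "linf_dist (reflect s v) w = linf_dist v (reflect s w)"
  by (metis linf_dist_reflect reflect_reflect)

lemma reflect_in_octE_iff [simp]: "(reflect s v, reflect s w) \<in> octE n \<longleftrightarrow> (v, w) \<in> octE n"
  by (cases s; cases v; cases w) (simp add: octE_def)

lemma relpow_octE_reflect: "(v, w) \<in> octE n ^^ k \<Longrightarrow> (reflect s v, reflect s w) \<in> octE n ^^ k"
proof (induction k arbitrary: w)
  case (Suc k)
  then obtain y where "(v, y) \<in> octE n ^^ k" "(y, w) \<in> octE n" by auto
  with Suc.IH show ?case by (meson reflect_in_octE_iff relpow_Suc_I)
qed simp

definition pos_face :: "nat \<Rightarrow> vtx set" where
  "pos_face n = {(a, b, c). a \<ge> 0 \<and> b \<ge> 0 \<and> c \<ge> 0 \<and> a + b + c = int n}"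

lemma pos_face_mem [simp]:
  "(a, b, c) \<in> pos_face n \<longleftrightarrow> a \<ge> 0 \<and> b \<ge> 0 \<and> c \<ge> 0 \<and> a + b + c = int n"
  by (simp add: pos_face_def)

lemma pos_face_subset_octV: "pos_face n \<subseteq> octV n"
  by (auto simp: pos_face_def)

lemma finite_pos_face: "finite (pos_face n)"
  using finite_octV pos_face_subset_octV by (rule finite_subset[rotated])

lemma reflect_into_pos_face:
  assumes "v \<in> octV n" obtains s where "reflect s v \<in> pos_face n"
proof -
  obtain a b c where v: "v = (a, b, c)" by (cases v)
  have "reflect (a \<ge> 0, b \<ge> 0, c \<ge> 0) v \<in> pos_face n"
    using assms unfolding v by (auto simp: flip_def)
  then show ?thesis by (rule that)
qed

lemma linf_dist_le_n_on_pos_face: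
  assumes "x \<in> pos_face n" "y \<in> pos_face n" shows "linf_dist x y \<le> n"
  using assms by (cases x; cases y) (auto simp: linf_dist_le_iff)

section \<open>Graph distance\<close>

definition l1_dist :: "vtx \<Rightarrow> vtx \<Rightarrow> int" where
  "l1_dist v w = (case v of (a1, a2, a3) \<Rightarrow> case w of (b1, b2, b3) \<Rightarrow>
     \<bar>a1 - b1\<bar> + \<bar>a2 - b2\<bar> + \<bar>a3 - b3\<bar>)"

lemma l1_dist_simp [simp]:
  "l1_dist (a1, a2, a3) (b1, b2, b3) = \<bar>a1 - b1\<bar> + \<bar>a2 - b2\<bar> + \<bar>a3 - b3\<bar>"
  by (simp add: l1_dist_def)

lemma sum_abs_eq_double_max:
  fixes d1 d2 d3 :: int
  assumes "d1 + d2 + d3 = 0"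
  shows "\<bar>d1\<bar> + \<bar>d2\<bar> + \<bar>d3\<bar> = 2 * max \<bar>d1\<bar> (max \<bar>d2\<bar> \<bar>d3\<bar>)"
  using assms by (simp add: max_def abs_if)

lemma l1_dist_eq_double_linf_dist:
  assumes "x \<in> pos_face n" "y \<in> pos_face n"
  shows "l1_dist x y = 2 * int (linf_dist x y)"
proof -
  obtain a1 a2 a3 b1 b2 b3 where xy: "x = (a1, a2, a3)" "y = (b1, b2, b3)"
    by (cases x; cases y)
  then have "(a1 - b1) + (a2 - b2) + (a3 - b3) = 0" using assms by auto
  from sum_abs_eq_double_max[OF this] show ?thesis unfolding xy by (simp add: le_max_iff_disj)
qed

lemma pos_face_edge:
  assumes "x \<in> pos_face n" "x' \<in> pos_face n" "x \<noteq> x'" "linf_dist x x' \<le> 1"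
  shows "(x, x') \<in> octE n"
  using assms pos_face_subset_octV
  by (cases x; cases x') (auto simp del: linf_dist_simp simp: octE_def linf_dist_le_iff)

text \<open>Within a face the \<open>\<ell>\<^sub>1\<close> distance is twice the Chebyshev distance, so moving one unit
  from a coordinate that is too large to one that is too small brings \<open>x\<close> closer to \<open>y\<close>.\<close>
lemma pos_face_step:
  assumes "x \<in> pos_face n" "y \<in> pos_face n" "x \<noteq> y"
  shows "\<exists>x'\<in>pos_face n. (x, x') \<in> octE n \<and> l1_dist x' y + 2 = l1_dist x y"
proof -
  have move: "\<exists>x'\<in>pos_face n. (x, x') \<in> octE n \<and> l1_dist x' y + 2 = l1_dist x y"
    if "x' \<in> pos_face n" "x \<noteq> x'" "linf_dist x x' \<le> 1" "l1_dist x' y + 2 = l1_dist x y" for x'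
    using that assms(1) pos_face_edge by blast
  obtain a1 a2 a3 b1 b2 b3 where xy: "x = (a1, a2, a3)" "y = (b1, b2, b3)"
    by (cases x; cases y)
  have sums: "a1 + a2 + a3 = int n" "b1 + b2 + b3 = int n"
    and nonneg: "a1 \<ge> 0" "a2 \<ge> 0" "a3 \<ge> 0" "b1 \<ge> 0" "b2 \<ge> 0" "b3 \<ge> 0"
    using assms(1,2) unfolding xy by auto
  have "a1 \<noteq> b1 \<or> a2 \<noteq> b2 \<or> a3 \<noteq> b3" using assms(3) unfolding xy by auto
  then consider "a1 < b1" "a2 > b2" | "a1 < b1" "a3 > b3" | "a2 < b2" "a1 > b1"
    | "a2 < b2" "a3 > b3" | "a3 < b3" "a1 > b1" | "a3 < b3" "a2 > b2"
    using sums by linarith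
  then show ?thesis
  proof cases
    case 1 show ?thesis
      by (rule move[of "(a1 + 1, a2 - 1, a3)"]) (use 1 sums nonneg in \<open>auto simp: xy\<close>)
  next
    case 2 show ?thesis
      by (rule move[of "(a1 + 1, a2, a3 - 1)"]) (use 2 sums nonneg in \<open>auto simp: xy\<close>)
  next
    case 3 show ?thesis
      by (rule move[of "(a1 - 1, a2 + 1, a3)"]) (use 3 sums nonneg in \<open>auto simp: xy\<close>)
  next
    case 4 show ?thesis
      by (rule move[of "(a1, a2 + 1, a3 - 1)"]) (use 4 sums nonneg in \<open>auto simp: xy\<close>)
  next
    case 5 show ?thesis
      by (rule move[of "(a1 - 1, a2, a3 + 1)"]) (use 5 sums nonneg in \<open>auto simp: xy\<close>)
  next
    case 6 show ?thesis
      by (rule move[of "(a1, a2 - 1, a3 + 1)"]) (use 6 sums nonneg in \<open>auto simp: xy\<close>)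
  qed
qed

lemma relpow_octE_pos_face:
  assumes "x \<in> pos_face n" "y \<in> pos_face n"
  shows "(x, y) \<in> octE n ^^ linf_dist x y"
proof -
  have "(x, y) \<in> octE n ^^ k" if "x \<in> pos_face n" "linf_dist x y = k" for k x
    using that
  proof (induction k arbitrary: x)
    case 0
    then show ?case by (simp add: linf_dist_eq_0_iff)
  next
    case (Suc k)
    then have "x \<noteq> y" by auto
    then obtain x' where x': "x' \<in> pos_face n" "(x, x') \<in> octE n" "l1_dist x' y + 2 = l1_dist x y"
      using pos_face_step[OF Suc.prems(1) assms(2)] by blast
    then have "linf_dist x' y = k"
      using l1_dist_eq_double_linf_dist[OF _ assms(2)] Suc.prems by fastforce
    then show ?case using Suc.IH[OF x'(1)] relpow_Suc_I2[OF x'(2)] by blast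
  qed
  with assms(1) show ?thesis by blast
qed

lemma relpow_octE_common_face:
  assumes "reflect s v \<in> pos_face n" "reflect s w \<in> pos_face n"
  shows "(v, w) \<in> octE n ^^ linf_dist v w"
  using relpow_octE_reflect[OF relpow_octE_pos_face[OF assms], of s] by simp

lemma rtrancl_octE_sym:
  assumes "(x, y) \<in> (octE n)\<^sup>*" shows "(y, x) \<in> (octE n)\<^sup>*"
proof -
  have "(octE n)\<inverse> = octE n" using octE_sym by auto
  with rtrancl_converseI[OF assms] show ?thesis by simp
qed

lemma rtrancl_octE_to_corner:
  assumes "v \<in> octV n" shows "(v, (int n, 0, 0)) \<in> (octE n)\<^sup>*"
proof -
  obtain p q r where s: "reflect (p, q, r) v \<in> pos_face n"
    using reflect_into_pos_face[OF assms] by (metis prod_cases3)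
  have "reflect (p, q, r) (flip p (int n), 0, 0) \<in> pos_face n" by simp
  then have to_face_corner: "(v, (flip p (int n), 0, 0)) \<in> (octE n)\<^sup>*"
    using relpow_octE_common_face[OF s] relpow_imp_rtrancl by blast
  have neg_face: "reflect (False, True, True) (- int n, 0, 0) \<in> pos_face n"
      "reflect (False, True, True) (0, int n, 0) \<in> pos_face n"
    and pos_corners: "(0, int n, 0) \<in> pos_face n" "(int n, 0, 0) \<in> pos_face n"
    by (simp_all add: flip_def)
  have "((- int n, 0, 0), (0, int n, 0)) \<in> (octE n)\<^sup>*"
    using relpow_octE_common_face[OF neg_face] by (rule relpow_imp_rtrancl)
  also have "((0, int n, 0), (int n, 0, 0)) \<in> (octE n)\<^sup>*"
    using relpow_octE_pos_face[OF pos_corners] by (rule relpow_imp_rtrancl)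
  finally have "((- int n, 0, 0), (int n, 0, 0)) \<in> (octE n)\<^sup>*" .
  with to_face_corner show ?thesis
    by (cases p) (auto simp: flip_def intro: rtrancl_trans)
qed

lemma relpow_octE_octd:
  assumes "v \<in> octV n" "w \<in> octV n" shows "(v, w) \<in> octE n ^^ octd n v w"
proof -
  have "(v, w) \<in> (octE n)\<^sup>*"
    using rtrancl_octE_to_corner[OF assms(1)] rtrancl_octE_sym[OF rtrancl_octE_to_corner[OF assms(2)]]
    by (rule rtrancl_trans)
  then obtain k where "(v, w) \<in> octE n ^^ k" using rtrancl_power by blast
  then show ?thesis unfolding octd_def by (rule LeastI)
qed

lemma linf_dist_le_octd:
  assumes "v \<in> octV n" "w \<in> octV n" shows "linf_dist v w \<le> octd n v w"
  using linf_dist_le_if_relpow_octE[OF relpow_octE_octd[OF assms]] .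

lemma octd_eq_linf_dist_common_face:
  assumes "reflect s v \<in> pos_face n" "reflect s w \<in> pos_face n"
  shows "octd n v w = linf_dist v w"
proof (rule antisym)
  show "octd n v w \<le> linf_dist v w"
    unfolding octd_def using relpow_octE_common_face[OF assms] by (rule Least_le)
  have "v \<in> octV n" "w \<in> octV n"
    using assms pos_face_subset_octV reflect_in_octV_iff by blast+
  then show "linf_dist v w \<le> octd n v w" by (rule linf_dist_le_octd)
qed

section \<open>Summation over level sets\<close>

lemma sum_comp_eq_level_counts:
  fixes g :: "nat \<Rightarrow> real" and f :: "'a \<Rightarrow> nat"
  assumes "finite A" and f_bounds: "\<And>w. w \<in> A \<Longrightarrow> 1 \<le> f w \<and> f w \<le> N"
  shows "(\<Sum>w\<in>A. g (f w)) =
    (\<Sum>k=1..N. (g k - g (Suc k)) * card {w\<in>A. f w \<le> k}) + g (Suc N) * card A"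
proof -
  have telescope: "g (f w) = (\<Sum>k=1..N. if f w \<le> k then g k - g (Suc k) else 0) + g (Suc N)"
    if "w \<in> A" for w
  proof -
    have "(\<Sum>k=1..N. if f w \<le> k then g k - g (Suc k) else 0) = (\<Sum>k=f w..N. g k - g (Suc k))"
      using f_bounds[OF that] by (intro sum.mono_neutral_cong_right) auto
    also have "\<dots> = g (f w) - g (Suc N)"
      using f_bounds[OF that] sum_Suc_diff[of "f w" N g] unfolding sum_subtractf by linarith
    finally show ?thesis by simp
  qed
  have "(\<Sum>w\<in>A. g (f w)) =
      (\<Sum>k=1..N. \<Sum>w\<in>A. if f w \<le> k then g k - g (Suc k) else 0) + g (Suc N) * card A"
    by (simp add: telescope sum.distrib sum.swap[of _ A])
  also have "(\<Sum>k=1..N. \<Sum>w\<in>A. if f w \<le> k then g k - g (Suc k) else 0) =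
      (\<Sum>k=1..N. (g k - g (Suc k)) * card {w\<in>A. f w \<le> k})"
    using \<open>finite A\<close> by (simp add: sum.If_cases Int_def mult.commute)
  finally show ?thesis .
qed

lemma sum_le_level_bounds:
  fixes g b :: "nat \<Rightarrow> real" and f :: "'a \<Rightarrow> nat"
  assumes "finite A" and f_bounds: "\<And>w. w \<in> A \<Longrightarrow> 1 \<le> f w \<and> f w \<le> N"
    and antimono: "\<And>k. 1 \<le> k \<Longrightarrow> g (Suc k) \<le> g k" and nonneg: "\<And>k. 0 \<le> g k"
    and count: "\<And>k. k \<le> N \<Longrightarrow> card {w\<in>A. f w \<le> k} \<le> b k"
  shows "(\<Sum>w\<in>A. g (f w)) \<le> g 1 * b 0 + (\<Sum>k=1..N. g k * (b k - b (k - 1)))"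
proof -
  have by_parts: "(\<Sum>k=1..M. (g k - g (Suc k)) * b k) + g (Suc M) * b M =
      g 1 * b 0 + (\<Sum>k=1..M. g k * (b k - b (k - 1)))" for M
    by (induction M) (simp_all add: algebra_simps)
  have "card A = card {w\<in>A. f w \<le> N}"
    using f_bounds by (metis (mono_tags, lifting) Collect_cong Collect_mem_eq)
  have "(\<Sum>w\<in>A. g (f w)) =
      (\<Sum>k=1..N. (g k - g (Suc k)) * card {w\<in>A. f w \<le> k}) + g (Suc N) * card A"
    by (rule sum_comp_eq_level_counts[OF assms(1) f_bounds])
  also have "\<dots> \<le> (\<Sum>k=1..N. (g k - g (Suc k)) * b k) + g (Suc N) * b N"
    using \<open>card A = _\<close> count[of N] nonneg[of "Suc N"]
    by (intro add_mono sum_mono mult_left_mono) (auto simp: count antimono)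
  finally show ?thesis by (simp only: by_parts)
qed

lemma sum_ge_level_bounds:
  fixes g b :: "nat \<Rightarrow> real" and f :: "'a \<Rightarrow> nat"
  assumes "finite A" and f_bounds: "\<And>w. w \<in> A \<Longrightarrow> 1 \<le> f w \<and> f w \<le> N"
    and antimono: "\<And>k. 1 \<le> k \<Longrightarrow> g (Suc k) \<le> g k" and nonneg: "\<And>k. 0 \<le> g k"
    and count: "\<And>k. 1 \<le> k \<Longrightarrow> k \<le> N \<Longrightarrow> b k \<le> card {w\<in>A. f w \<le> k}"
  shows "(\<Sum>k=1..N. (g k - g (Suc k)) * b k) \<le> (\<Sum>w\<in>A. g (f w))"
proof -
  have "(\<Sum>k=1..N. (g k - g (Suc k)) * b k) \<le> (\<Sum>k=1..N. (g k - g (Suc k)) * card {w\<in>A. f w \<le> k})"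
    by (intro sum_mono mult_left_mono) (auto simp: count antimono)
  also have "\<dots> \<le> (\<Sum>k=1..N. (g k - g (Suc k)) * card {w\<in>A. f w \<le> k}) + g (Suc N) * card A"
    using nonneg[of "Suc N"] by simp
  also have "\<dots> = (\<Sum>w\<in>A. g (f w))"
    by (rule sum_comp_eq_level_counts[symmetric]) (use assms(1) f_bounds in auto)
  finally show ?thesis .
qed

section \<open>The normalising constant\<close>

lemma card_triangle: "2 * card {p :: nat \<times> nat. fst p + snd p \<le> k} = (k + 1) * (k + 2)"
proof -
  have "{p :: nat \<times> nat. fst p + snd p \<le> k} = Sigma {0..k} (\<lambda>i. {0..k - i})" by auto
  then have "card {p :: nat \<times> nat. fst p + snd p \<le> k} = (\<Sum>i=0..k. Suc (k - i))"
    by (simp add: card_SigmaI)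
  also have "\<dots> = (\<Sum>i=0..k. i + 1)"
    by (rule sum.reindex_bij_witness[where i = "\<lambda>i. k - i" and j = "\<lambda>i. k - i"]) auto
  also have "\<dots> = (\<Sum>i=0..k. i) + (k + 1)"
    by (simp only: sum.distrib) simp
  finally show ?thesis using double_gauss_sum[of k, where 'a = nat]
    by (simp add: algebra_simps)
qed

text \<open>The ball contains a translate of the lattice triangle \<open>{(i, j). i + j \<le> k}\<close> inside the face.\<close>
lemma card_pos_face_ball_ge:
  assumes x: "x \<in> pos_face n" and "k \<le> n"
  shows "(k + 1) * (k + 2) \<le> 2 * card {y\<in>pos_face n. linf_dist x y \<le> k}"
proof -
  obtain a1 a2 a3 where xa: "x = (a1, a2, a3)" by (cases x)
  have a: "a1 \<ge> 0" "a2 \<ge> 0" "a3 \<ge> 0" "a1 + a2 + a3 = int n" using x xa by auto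
  define c1 where "c1 = min a1 (int n - int k)"
  define c2 where "c2 = min a2 (int n - int k - c1)"
  define c3 where "c3 = int n - int k - c1 - c2"
  have c: "0 \<le> c1" "c1 \<le> a1" "0 \<le> c2" "c2 \<le> a2" "0 \<le> c3" "c3 \<le> a3"
    using a \<open>k \<le> n\<close> unfolding c1_def c2_def c3_def by auto
  define \<phi> where "\<phi> p = (c1 + int (fst p), c2 + int (snd p), c3 + int k - int (fst p) - int (snd p))"
    for p :: "nat \<times> nat"
  let ?T = "{p :: nat \<times> nat. fst p + snd p \<le> k}"
  have "\<phi> ` ?T \<subseteq> {y\<in>pos_face n. linf_dist x y \<le> k}"
    using a c by (auto simp: \<phi>_def xa c3_def linf_dist_le_iff simp del: linf_dist_simp)
  moreover have "inj_on \<phi> ?T" by (auto simp: \<phi>_def inj_on_def)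
  ultimately have "card ?T \<le> card {y\<in>pos_face n. linf_dist x y \<le> k}"
    using finite_pos_face by (intro card_inj_on_le) auto
  then show ?thesis using card_triangle[of k] by simp
qed

text \<open>\<open>q\<close> stands for \<open>r + 1\<close>; keeping it a separate variable lets the lemma be instantiated at
  \<open>real (Suc k)\<close> without the simplifier rewriting it to \<open>1 + real k\<close>.\<close>
lemma inverse_square_step_ge:
  fixes r q :: real assumes "r \<ge> 1" and q: "q = r + 1"
  shows "(1 / r\<^sup>2 - 1 / q\<^sup>2) * (r * (r + 3) / 2) \<ge> 1 / r + (1 / r - 1 / q)"
proof -
  have "q > 0" using assms by simp
  have "(1 / r\<^sup>2 - 1 / q\<^sup>2) * (r * (r + 3) / 2) - (1 / r + (1 / r - 1 / q))
     = ((q\<^sup>2 - r\<^sup>2) * (r + 3) - 2 * q * (2 * q - r)) / (2 * r * q\<^sup>2)"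
    using \<open>r \<ge> 1\<close> \<open>q > 0\<close> by (simp add: field_simps power2_eq_square)
  also have "(q\<^sup>2 - r\<^sup>2) * (r + 3) - 2 * q * (2 * q - r) = r - 1"
    unfolding q by (simp add: algebra_simps power2_eq_square)
  finally have "(1 / r\<^sup>2 - 1 / q\<^sup>2) * (r * (r + 3) / 2) - (1 / r + (1 / r - 1 / q))
      = (r - 1) / (2 * r * q\<^sup>2)" .
  moreover have "(r - 1) / (2 * r * q\<^sup>2) \<ge> 0" using assms by simp
  ultimately show ?thesis by linarith
qed

lemma inverse_square_level_sum_ge:
  "(\<Sum>k=1..n. (1 / real k ^ 2 - 1 / real (Suc k) ^ 2) * (real k * (real k + 3) / 2))
     \<ge> harm n + 1 - 1 / real (Suc n)"
proof (induction n)
  case (Suc n)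
  have "(\<Sum>k=1..Suc n. (1 / real k ^ 2 - 1 / real (Suc k) ^ 2) * (real k * (real k + 3) / 2))
     = (\<Sum>k=1..n. (1 / real k ^ 2 - 1 / real (Suc k) ^ 2) * (real k * (real k + 3) / 2))
       + (1 / real (Suc n) ^ 2 - 1 / real (Suc (Suc n)) ^ 2) * (real (Suc n) * (real (Suc n) + 3) / 2)"
    by simp
  moreover have "(1 / real (Suc n) ^ 2 - 1 / real (Suc (Suc n)) ^ 2) * (real (Suc n) * (real (Suc n) + 3) / 2)
      \<ge> 1 / real (Suc n) + (1 / real (Suc n) - 1 / real (Suc (Suc n)))"
    by (rule inverse_square_step_ge) simp_all
  moreover have "harm (Suc n) = harm n + 1 / real (Suc n)"
    by (simp add: harm_Suc inverse_eq_divide)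
  ultimately show ?case using Suc.IH by linarith
qed (simp add: harm_def)

lemma pos_face_inverse_square_sum_ge:
  assumes x: "x \<in> pos_face n" and "n \<ge> 1"
  shows "(\<Sum>y\<in>pos_face n - {x}. 1 / real (linf_dist x y) ^ 2) \<ge> ln (real n + 1) + 1 / 2"
proof -
  let ?A = "pos_face n - {x}"
  have bounds: "1 \<le> linf_dist x y \<and> linf_dist x y \<le> n" if "y \<in> ?A" for y
    using that linf_dist_le_n_on_pos_face[OF x] linf_dist_eq_0_iff[of x y]
    by (auto simp: Suc_le_eq)
  have count: "real k * (real k + 3) / 2 \<le> card {y\<in>?A. linf_dist x y \<le> k}" if "k \<le> n" for k
  proof -
    have "{y\<in>?A. linf_dist x y \<le> k} = {y\<in>pos_face n. linf_dist x y \<le> k} - {x}" by auto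
    then have "card {y\<in>?A. linf_dist x y \<le> k} = card {y\<in>pos_face n. linf_dist x y \<le> k} - 1"
      using x finite_pos_face by simp
    with card_pos_face_ball_ge[OF x that] have "k * (k + 3) \<le> 2 * card {y\<in>?A. linf_dist x y \<le> k}"
      by (simp add: algebra_simps)
    then have "real (k * (k + 3)) \<le> real (2 * card {y\<in>?A. linf_dist x y \<le> k})"
      by (simp only: of_nat_le_iff)
    then show ?thesis by simp
  qed
  have "1 / real (Suc n) \<le> 1 / 2" using \<open>n \<ge> 1\<close> by (simp add: field_simps)
  then have "ln (real n + 1) + 1 / 2 \<le> harm n + 1 - 1 / real (Suc n)"
    using ln_le_harm[of n] by linarith
  also have "\<dots> \<le> (\<Sum>k=1..n. (1 / real k ^ 2 - 1 / real (Suc k) ^ 2) * (real k * (real k + 3) / 2))"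
    by (rule inverse_square_level_sum_ge)
  also have "\<dots> \<le> (\<Sum>y\<in>?A. 1 / real (linf_dist x y) ^ 2)"
    using finite_pos_face bounds count
    by (intro sum_ge_level_bounds) (auto simp: frac_le power_mono)
  finally show ?thesis .
qed

lemma octd_inverse_square_sum_ge:
  assumes v: "v \<in> octV n" and "n \<ge> 1"
  shows "(\<Sum>w\<in>octV n - {v}. 1 / real (octd n v w) ^ 2) \<ge> ln (real n + 1) + 1 / 2"
proof -
  obtain s where x: "reflect s v \<in> pos_face n" using reflect_into_pos_face[OF v] .
  let ?x = "reflect s v"
  have "ln (real n + 1) + 1 / 2 \<le> (\<Sum>y\<in>pos_face n - {?x}. 1 / real (linf_dist ?x y) ^ 2)"
    using pos_face_inverse_square_sum_ge[OF x \<open>n \<ge> 1\<close>] .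
  also have "\<dots> = (\<Sum>y\<in>pos_face n - {?x}. 1 / real (octd n v (reflect s y)) ^ 2)"
    using x by (intro sum.cong refl) (simp add: octd_eq_linf_dist_common_face[of s] linf_dist_reflect_left)
  also have "\<dots> = (\<Sum>w\<in>reflect s ` (pos_face n - {?x}). 1 / real (octd n v w) ^ 2)"
    by (subst sum.reindex) (auto simp: inj_on_def)
  also have "\<dots> \<le> (\<Sum>w\<in>octV n - {v}. 1 / real (octd n v w) ^ 2)"
  proof (rule sum_mono2)
    show "finite (octV n - {v})" using finite_octV by simp
    show "reflect s ` (pos_face n - {?x}) \<subseteq> octV n - {v}"
      using pos_face_subset_octV[of n]
      by (auto simp del: pos_face_mem octV_mem)
  qed simp
  finally show ?thesis .
qed

lemma Zc_nonneg: "Zc n v \<ge> 0"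
  unfolding Zc_def by (simp add: sum_nonneg)

lemma Zc_inverse_sum:
  assumes "v \<in> octV n" "n \<ge> 1"
  shows "Zc n v * (\<Sum>w\<in>octV n - {v}. 1 / real (octd n v w) ^ 2) = 1"
proof -
  have "(\<Sum>w\<in>octV n - {v}. 1 / real (octd n v w) ^ 2) > 0"
    using octd_inverse_square_sum_ge[OF assms] ln_ge_zero[of "real n + 1"] by linarith
  then show ?thesis by (simp add: Zc_def)
qed

lemma Zc_le:
  assumes "v \<in> octV n" "n \<ge> 1"
  shows "Zc n v \<le> 1 / (ln (real n + 1) + 1 / 2)"
proof -
  have "ln (real n + 1) \<ge> 0" by simp
  then have "0 < ln (real n + 1) + 1 / 2" by linarith
  with octd_inverse_square_sum_ge[OF assms] show ?thesis
    unfolding Zc_def inverse_eq_divide by (intro frac_le) simp_all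
qed

lemma pmf_choice_pmf:
  assumes "v \<in> octV n" "n \<ge> 1"
  shows "pmf (choice_pmf n v) w
    = (if w \<in> octV n - {v} then Zc n v * (1 / real (octd n v w) ^ 2) else 0)"
proof -
  define f where "f w = (if w \<in> octV n - {v} then Zc n v * (1 / real (octd n v w) ^ 2) else 0)"
    for w
  have nonneg: "0 \<le> f w" for w by (simp add: f_def Zc_nonneg)
  have "(\<integral>\<^sup>+x. ennreal (f x) \<partial>count_space UNIV) = (\<Sum>x\<in>octV n - {v}. ennreal (f x))"
    by (rule nn_integral_count_space') (auto simp: f_def finite_octV)
  also have "\<dots> = ennreal (\<Sum>x\<in>octV n - {v}. f x)"
    using nonneg by (simp add: sum_ennreal)
  also have "(\<Sum>x\<in>octV n - {v}. f x) = Zc n v * (\<Sum>w\<in>octV n - {v}. 1 / real (octd n v w) ^ 2)"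
    by (simp add: f_def sum_distrib_left)
  finally have "(\<integral>\<^sup>+x. ennreal (f x) \<partial>count_space UNIV) = 1"
    by (simp add: Zc_inverse_sum[OF assms])
  with nonneg have "pmf (embed_pmf f) w = f w" by (intro pmf_embed_pmf) auto
  moreover have "choice_pmf n v = embed_pmf f" by (simp add: choice_pmf_def f_def[abs_def])
  ultimately show ?thesis by (simp add: f_def)
qed

lemma pmf_choice_pmf_le:
  assumes "v \<in> octV n" "n \<ge> 1"
  shows "pmf (choice_pmf n v) w \<le> 1 / (ln (real n + 1) + 1 / 2) * (1 / real (linf_dist v w) ^ 2)"
proof (cases "w \<in> octV n - {v}")
  case True
  then have "1 \<le> linf_dist v w" "linf_dist v w \<le> octd n v w"
    using linf_dist_eq_0_iff[of v w] linf_dist_le_octd[OF assms(1)] by (auto simp: Suc_le_eq)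
  then have "1 / real (octd n v w) ^ 2 \<le> 1 / real (linf_dist v w) ^ 2"
    by (intro frac_le power_mono) auto
  with Zc_nonneg have "Zc n v * (1 / real (octd n v w) ^ 2)
      \<le> 1 / (ln (real n + 1) + 1 / 2) * (1 / real (linf_dist v w) ^ 2)"
    using Zc_le[OF assms] by (intro mult_mono) simp_all
  then show ?thesis using True by (simp add: pmf_choice_pmf[OF assms])
next
  case False
  then have "pmf (choice_pmf n v) w = 0" by (simp only: pmf_choice_pmf[OF assms] if_False)
  moreover have "0 \<le> ln (real n + 1)" by simp
  ultimately show ?thesis by simp
qed

section \<open>Union bound over triangles\<close>

definition cycle_event :: "vtx \<Rightarrow> vtx \<Rightarrow> vtx \<Rightarrow> (vtx \<Rightarrow> vtx) set" where
  "cycle_event u a b = {\<omega>. \<omega> u = a \<and> \<omega> a = b \<and> \<omega> b = u}"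

lemma prob_cycle_event:
  assumes "u \<in> octV n" "a \<in> octV n" "b \<in> octV n" "u \<noteq> a" "u \<noteq> b" "a \<noteq> b"
  shows "measure_pmf.prob (OSW_space n) (cycle_event u a b)
       = pmf (choice_pmf n u) a * pmf (choice_pmf n a) b * pmf (choice_pmf n b) u"
proof -
  define B where "B x = (if x = u then {a} else if x = a then {b} else if x = b then {u} else UNIV)"
    for x
  have "cycle_event u a b = Pi (octV n) B"
  proof (intro set_eqI iffI)
    fix \<omega> assume "\<omega> \<in> Pi (octV n) B"
    then have "\<omega> u \<in> B u" "\<omega> a \<in> B a" "\<omega> b \<in> B b"
      using assms(1-3) by (auto simp del: octV_mem)
    then show "\<omega> \<in> cycle_event u a b" using assms(4-6) by (auto simp: B_def cycle_event_def)
  qed (use assms in \<open>auto simp: cycle_event_def B_def\<close>)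
  then have "measure_pmf.prob (OSW_space n) (cycle_event u a b)
      = (\<Prod>x\<in>octV n. measure_pmf.prob (choice_pmf n x) (B x))"
    unfolding OSW_space_def by (simp add: measure_Pi_pmf_Pi[OF finite_octV])
  also have "\<dots> = (\<Prod>x\<in>{u, a, b}. measure_pmf.prob (choice_pmf n x) (B x))"
    using assms finite_octV by (intro prod.mono_neutral_right) (auto simp: B_def simp del: octV_mem)
  also have "\<dots> = pmf (choice_pmf n u) a * pmf (choice_pmf n a) b * pmf (choice_pmf n b) u"
    using assms by (simp add: B_def measure_pmf_single)
  finally show ?thesis .
qed

lemma E7_subset_cycle_events:
  "E7 n u \<subseteq> (\<Union>(a, b)\<in>Sigma (octV n - {u}) (\<lambda>a. octV n - {u, a}). cycle_event u a b)"
  unfolding E7_def cycle_event_def type_w_def chooses_def by auto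

lemma prob_E7_le_cycle_sum:
  "measure_pmf.prob (OSW_space n) (E7 n u)
     \<le> (\<Sum>a\<in>octV n - {u}. \<Sum>b\<in>octV n - {u, a}. measure_pmf.prob (OSW_space n) (cycle_event u a b))"
proof -
  let ?I = "Sigma (octV n - {u}) (\<lambda>a. octV n - {u, a})"
  have "measure_pmf.prob (OSW_space n) (E7 n u)
      \<le> measure_pmf.prob (OSW_space n) (\<Union>(a, b)\<in>?I. cycle_event u a b)"
    by (rule measure_pmf.finite_measure_mono[OF E7_subset_cycle_events]) simp
  also have "\<dots> \<le> (\<Sum>(a, b)\<in>?I. measure_pmf.prob (OSW_space n) (cycle_event u a b))"
    using measure_pmf.finite_measure_subadditive_finite[of ?I "\<lambda>(a, b). cycle_event u a b"] finite_octV
    by (simp add: split_def)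
  also have "\<dots> = (\<Sum>a\<in>octV n - {u}. \<Sum>b\<in>octV n - {u, a}.
      measure_pmf.prob (OSW_space n) (cycle_event u a b))"
    using finite_octV by (subst sum.Sigma) auto
  finally show ?thesis .
qed

definition triangle_weight :: "vtx \<Rightarrow> vtx \<Rightarrow> vtx \<Rightarrow> real" where
  "triangle_weight u a b =
     1 / real (linf_dist u a) ^ 2 * (1 / real (linf_dist a b) ^ 2) * (1 / real (linf_dist b u) ^ 2)"

lemma prob_E7_le_triangle_sum:
  assumes u: "u \<in> octV n" and "n \<ge> 1"
  shows "measure_pmf.prob (OSW_space n) (E7 n u)
    \<le> (1 / (ln (real n + 1) + 1 / 2)) ^ 3 *
       (\<Sum>a\<in>octV n - {u}. \<Sum>b\<in>octV n - {u, a}. triangle_weight u a b)"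
proof -
  let ?Z = "1 / (ln (real n + 1) + 1 / 2)"
  have cycle_le: "measure_pmf.prob (OSW_space n) (cycle_event u a b) \<le> ?Z ^ 3 * triangle_weight u a b"
    if "a \<in> octV n - {u}" "b \<in> octV n - {u, a}" for a b
  proof -
    have "measure_pmf.prob (OSW_space n) (cycle_event u a b)
       = pmf (choice_pmf n u) a * pmf (choice_pmf n a) b * pmf (choice_pmf n b) u"
      using that u by (intro prob_cycle_event) auto
    also have "\<dots> \<le> (?Z * (1 / real (linf_dist u a) ^ 2)) * (?Z * (1 / real (linf_dist a b) ^ 2))
        * (?Z * (1 / real (linf_dist b u) ^ 2))"
      using that u \<open>n \<ge> 1\<close>
      by (intro mult_mono pmf_choice_pmf_le mult_nonneg_nonneg) (auto simp: pmf_nonneg)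
    also have "\<dots> = ?Z ^ 3 * triangle_weight u a b"
      by (simp add: triangle_weight_def power3_eq_cube algebra_simps)
    finally show ?thesis .
  qed
  have "measure_pmf.prob (OSW_space n) (E7 n u)
      \<le> (\<Sum>a\<in>octV n - {u}. \<Sum>b\<in>octV n - {u, a}. measure_pmf.prob (OSW_space n) (cycle_event u a b))"
    by (rule prob_E7_le_cycle_sum)
  also have "\<dots> \<le> (\<Sum>a\<in>octV n - {u}. \<Sum>b\<in>octV n - {u, a}. ?Z ^ 3 * triangle_weight u a b)"
    using cycle_le by (intro sum_mono) auto
  also have "\<dots> = ?Z ^ 3 * (\<Sum>a\<in>octV n - {u}. \<Sum>b\<in>octV n - {u, a}. triangle_weight u a b)"
    by (simp add: sum_distrib_left)
  finally show ?thesis .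
qed

section \<open>Inverse power sums\<close>

lemma inverse_cube_le_telescoping:
  fixes r :: real assumes "r \<ge> 1"
  shows "1 / r ^ 3 \<le> 2 / (2 * r - 1)\<^sup>2 - 2 / (2 * r + 1)\<^sup>2"
proof -
  have "1 \<le> r\<^sup>2" using assms by (simp add: one_le_power)
  then have pos: "0 < 4 * r\<^sup>2 - 1" by linarith
  have "1 / r ^ 3 = 16 * r / (4 * r\<^sup>2)\<^sup>2" using assms by (simp add: field_simps power2_eq_square power3_eq_cube)
  also have "\<dots> \<le> 16 * r / (4 * r\<^sup>2 - 1)\<^sup>2"
    using assms pos by (intro divide_left_mono power_mono mult_pos_pos) auto
  also have "\<dots> = 2 / (2 * r - 1)\<^sup>2 - 2 / (2 * r + 1)\<^sup>2"
  proof -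
    define x y where "x = 2 * r - 1" and "y = 2 * r + 1"
    have "x \<noteq> 0" "y \<noteq> 0" using assms by (auto simp: x_def y_def)
    then have "2 / x\<^sup>2 - 2 / y\<^sup>2 = 2 * (y\<^sup>2 - x\<^sup>2) / (x * y)\<^sup>2"
      by (simp add: field_simps power2_eq_square)
    also have "2 * (y\<^sup>2 - x\<^sup>2) = 16 * r" by (simp add: x_def y_def power2_eq_square algebra_simps)
    also have "x * y = 4 * r\<^sup>2 - 1" by (simp add: x_def y_def power2_eq_square algebra_simps)
    finally show ?thesis by (simp add: x_def y_def)
  qed
  finally show ?thesis .
qed

lemma sum_inverse_cube_tail_le:
  assumes "m \<ge> 1" shows "(\<Sum>k=m..N. 1 / real k ^ 3) \<le> 2 / (2 * real m - 1)\<^sup>2"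
proof (cases "m \<le> N")
  case True
  define c where "c k = 2 / (2 * real k - 1)\<^sup>2" for k
  have "(\<Sum>k=m..N. 1 / real k ^ 3) \<le> (\<Sum>k=m..N. c k - c (Suc k))"
    using assms inverse_cube_le_telescoping by (intro sum_mono) (auto simp: c_def algebra_simps)
  also have "\<dots> = c m - c (Suc N)"
    using True sum_Suc_diff[of m N c] unfolding sum_subtractf by linarith
  also have "\<dots> \<le> c m" by (simp add: c_def)
  finally show ?thesis by (simp add: c_def)
qed simp

lemma sum_inverse_cube_le: "(\<Sum>k=1..N. 1 / real k ^ 3) \<le> 241 / 200"
proof (cases "N \<le> 2")
  case True
  then have "N = 0 \<or> N = 1 \<or> N = 2" by auto
  then show ?thesis by (auto simp: numeral_2_eq_2)
next
  case False
  then have "{1..N} = {1..2} \<union> {3..N}" by auto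
  then have "(\<Sum>k=1..N. 1 / real k ^ 3) = (\<Sum>k=1..2. 1 / real k ^ 3) + (\<Sum>k=3..N. 1 / real k ^ 3)"
    by (simp add: sum.union_disjoint)
  also have "\<dots> \<le> 9 / 8 + 2 / 25"
    using sum_inverse_cube_tail_le[of 3 N] by (simp add: numeral_2_eq_2)
  finally show ?thesis by simp
qed

lemma sum_sum_symmetric_eq:
  fixes f :: "'a :: linorder \<Rightarrow> 'a \<Rightarrow> real"
  assumes "finite I" and sym: "\<And>x y. f x y = f y x"
  shows "(\<Sum>x\<in>I. \<Sum>y\<in>I. f x y) = 2 * (\<Sum>x\<in>I. \<Sum>y\<in>{y\<in>I. y < x}. f x y) + (\<Sum>x\<in>I. f x x)"
proof -
  have split: "(\<Sum>y\<in>I. f x y) = (\<Sum>y\<in>{y\<in>I. y < x}. f x y) + (\<Sum>y\<in>{y\<in>I. x < y}. f x y) + f x x"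
    if "x \<in> I" for x
  proof -
    have "I = {y\<in>I. y < x} \<union> {y\<in>I. x < y} \<union> {x}" using that by auto
    then show ?thesis using \<open>finite I\<close>
      by (subst (1) \<open>I = _\<close>) (subst sum.union_disjoint; auto intro: sum.union_disjoint)+
  qed
  have "(\<Sum>x\<in>I. \<Sum>y\<in>{y\<in>I. x < y}. f x y) = (\<Sum>x\<in>I. \<Sum>y\<in>{y\<in>I. y < x}. f x y)"
    using \<open>finite I\<close> by (subst sum.swap_restrict) (auto simp: sym)
  then show ?thesis by (simp add: split sum.distrib)
qed

lemma sum_inverse_quartic_le:
  "(\<Sum>k=1..N. 1 / real k ^ 4 + 4 / (real k * (2 * real k + 1)\<^sup>2)) \<le> 42 / 25"
proof -
  define \<phi> where "\<phi> k = 1 / real k ^ 4 + 4 / (real k * (2 * real k + 1)\<^sup>2)" for k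
  have tail: "\<phi> k \<le> 5 / 4 * (1 / real k ^ 3)" if "k \<ge> 4" for k
  proof -
    have k: "real k \<ge> 4" using that by simp
    have "4 * real k ^ 3 \<le> real k ^ 4" using k by (simp add: power_def)
    then have "1 / real k ^ 4 \<le> 1 / 4 * (1 / real k ^ 3)" using k by (simp add: field_simps)
    moreover have "4 * real k ^ 3 \<le> real k * (2 * real k + 1)\<^sup>2"
      using k by (simp add: power_def algebra_simps)
    then have "4 / (real k * (2 * real k + 1)\<^sup>2) \<le> 1 / real k ^ 3" using k by (simp add: field_simps)
    ultimately show ?thesis by (simp add: \<phi>_def)
  qed
  have "(\<Sum>k=1..N. \<phi> k) \<le> (\<Sum>k\<in>{1..3} \<union> {4..N}. \<phi> k)"
    by (rule sum_mono2) (auto simp: \<phi>_def)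
  also have "\<dots> = \<phi> 1 + \<phi> 2 + \<phi> 3 + (\<Sum>k=4..N. \<phi> k)"
    by (subst sum.union_disjoint) (auto simp: numeral_3_eq_3 numeral_2_eq_2)
  also have "(\<Sum>k=4..N. \<phi> k) \<le> 5 / 4 * (\<Sum>k=4..N. 1 / real k ^ 3)"
    using tail by (auto simp: sum_distrib_left intro!: sum_mono)
  also have "(\<Sum>k=4..N. 1 / real k ^ 3) \<le> 2 / 49"
    using sum_inverse_cube_tail_le[of 4 N] by simp
  finally show ?thesis by (simp add: \<phi>_def)
qed

lemma sum_inverse_max_square_le:
  "(\<Sum>x=1..N. \<Sum>k=1..N. 1 / (real x * real k * real (max x k) ^ 2)) \<le> 42 / 25"
proof -
  define t where "t x k = 1 / (real x * real k * real (max x k) ^ 2)" for x k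
  have below_diagonal: "(\<Sum>x\<in>{x\<in>{1..N}. k < x}. t x k) \<le> 2 / (real k * (2 * real k + 1)\<^sup>2)"
    if "k \<ge> 1" for k
  proof -
    have "(\<Sum>x\<in>{x\<in>{1..N}. k < x}. t x k) = 1 / real k * (\<Sum>x=Suc k..N. 1 / real x ^ 3)"
      using that by (auto simp: t_def sum_distrib_left max_def power_def field_simps intro!: sum.cong)
    also have "\<dots> \<le> 1 / real k * (2 / (2 * real (Suc k) - 1)\<^sup>2)"
      by (intro mult_left_mono sum_inverse_cube_tail_le) auto
    also have "\<dots> = 2 / (real k * (2 * real k + 1)\<^sup>2)" by (simp add: algebra_simps)
    finally show ?thesis .
  qed
  have "(\<Sum>x=1..N. \<Sum>k=1..N. t x k) = 2 * (\<Sum>x=1..N. \<Sum>k\<in>{k\<in>{1..N}. k < x}. t x k) + (\<Sum>k=1..N. t k k)"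
    by (rule sum_sum_symmetric_eq) (auto simp: t_def max.commute mult.commute)
  also have "(\<Sum>x=1..N. \<Sum>k\<in>{k\<in>{1..N}. k < x}. t x k) = (\<Sum>k=1..N. \<Sum>x\<in>{x\<in>{1..N}. k < x}. t x k)"
    by (rule sum.swap_restrict) auto
  also have "(\<Sum>k=1..N. t k k) = (\<Sum>k=1..N. 1 / real k ^ 4)"
    by (simp add: t_def power_def mult_ac)
  also have "2 * (\<Sum>k=1..N. \<Sum>x\<in>{x\<in>{1..N}. k < x}. t x k) + (\<Sum>k=1..N. 1 / real k ^ 4)
      \<le> 2 * (\<Sum>k=1..N. 2 / (real k * (2 * real k + 1)\<^sup>2)) + (\<Sum>k=1..N. 1 / real k ^ 4)"
    using below_diagonal by (intro add_mono mult_left_mono sum_mono) auto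
  also have "\<dots> = (\<Sum>k=1..N. 1 / real k ^ 4 + 4 / (real k * (2 * real k + 1)\<^sup>2))"
    by (simp add: sum.distrib sum_distrib_left)
  also have "\<dots> \<le> 42 / 25" by (rule sum_inverse_quartic_le)
  finally show ?thesis unfolding t_def .
qed

section \<open>Sums over Chebyshev balls\<close>

text \<open>A vertex of the octahedron is determined by its first two coordinates and the sign of the
  third one.\<close>
lemma card_octV_ball_le:
  assumes "v \<in> octV n"
  shows "card {w\<in>octV n. linf_dist v w \<le> k} \<le> 2 * (2 * k + 1)\<^sup>2"
proof -
  obtain a1 a2 a3 where v: "v = (a1, a2, a3)" by (cases v)
  define \<pi> where "\<pi> w = (fst w, fst (snd w), 0 \<le> snd (snd w))" for w :: vtx
  let ?B = "{a1 - int k..a1 + int k} \<times> {a2 - int k..a2 + int k} \<times> (UNIV :: bool set)"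
  have "inj_on \<pi> {w\<in>octV n. linf_dist v w \<le> k}"
  proof (rule inj_onI)
    fix w w' assume "w \<in> {w\<in>octV n. linf_dist v w \<le> k}" "w' \<in> {w\<in>octV n. linf_dist v w \<le> k}"
      and "\<pi> w = \<pi> w'"
    moreover obtain b1 b2 b3 d1 d2 d3 where "w = (b1, b2, b3)" "w' = (d1, d2, d3)"
      by (cases w; cases w')
    ultimately show "w = w'" by (auto simp: \<pi>_def)
  qed
  moreover have "\<pi> ` {w\<in>octV n. linf_dist v w \<le> k} \<subseteq> ?B"
    by (auto simp: \<pi>_def v linf_dist_le_iff abs_le_iff simp del: linf_dist_simp)
  ultimately have "card {w\<in>octV n. linf_dist v w \<le> k} \<le> card ?B"
    by (intro card_inj_on_le) auto
  also have "card ?B = 2 * (2 * k + 1)\<^sup>2"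
  proof -
    have "nat (2 * int k + 1) = 2 * k + 1" by linarith
    then show ?thesis by (simp add: card_cartesian_product power2_eq_square)
  qed
  finally show ?thesis .
qed

lemma card_octV_punctured_ball_le:
  assumes "v \<in> octV n"
  shows "real (card {w\<in>octV n - {v}. linf_dist v w \<le> k}) \<le> 8 * real k ^ 2 + 8 * real k + 1"
proof -
  have "{w\<in>octV n - {v}. linf_dist v w \<le> k} = {w\<in>octV n. linf_dist v w \<le> k} - {v}" by auto
  moreover have "v \<in> {w\<in>octV n. linf_dist v w \<le> k}" using assms by simp
  ultimately have "card {w\<in>octV n - {v}. linf_dist v w \<le> k} + 1 = card {w\<in>octV n. linf_dist v w \<le> k}"
    using card.remove[of "{w\<in>octV n. linf_dist v w \<le> k}" v] finite_octV by simp
  with card_octV_ball_le[OF assms, of k]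
  have "card {w\<in>octV n - {v}. linf_dist v w \<le> k} + 1 \<le> 2 * (2 * k + 1)\<^sup>2" by simp
  then have "real (card {w\<in>octV n - {v}. linf_dist v w \<le> k}) + 1 \<le> 2 * (2 * real k + 1)\<^sup>2"
    by (metis (mono_tags, lifting) of_nat_1 of_nat_add of_nat_le_iff of_nat_mult of_nat_numeral of_nat_power)
  then show ?thesis by (simp add: power2_eq_square algebra_simps)
qed

text \<open>The factor \<open>16 k\<close> is the increment of the bound \<open>8 k\<^sup>2 + 8 k + 1\<close> on the punctured balls.\<close>
lemma sum_octV_linf_dist_le:
  fixes g :: "nat \<Rightarrow> real"
  assumes c: "c \<in> octV n" and "g 0 = 0" and antimono: "\<And>k. 1 \<le> k \<Longrightarrow> g (Suc k) \<le> g k"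
    and nonneg: "\<And>k. 0 \<le> g k"
  shows "(\<Sum>r\<in>octV n. g (linf_dist c r)) \<le> g 1 + (\<Sum>k=1..2*n. 16 * real k * g k)"
proof -
  define b where "b k = 8 * real k ^ 2 + 8 * real k + 1" for k
  have "(\<Sum>r\<in>octV n. g (linf_dist c r)) = (\<Sum>r\<in>octV n - {c}. g (linf_dist c r))"
    using c finite_octV \<open>g 0 = 0\<close> by (simp add: sum.remove del: octV_mem)
  also have "\<dots> \<le> g 1 * b 0 + (\<Sum>k=1..2*n. g k * (b k - b (k - 1)))"
  proof (rule sum_le_level_bounds)
    show "1 \<le> linf_dist c w \<and> linf_dist c w \<le> 2 * n" if "w \<in> octV n - {c}" for w
      using that c linf_dist_le_double linf_dist_eq_0_iff[of c w] by (auto simp: Suc_le_eq)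
    show "card {w\<in>octV n - {c}. linf_dist c w \<le> k} \<le> b k" for k
      unfolding b_def by (rule card_octV_punctured_ball_le[OF c])
  qed (use finite_octV antimono nonneg in auto)
  also have "\<dots> = g 1 + (\<Sum>k=1..2*n. 16 * real k * g k)"
  proof -
    have "g k * (b k - b (k - 1)) = 16 * real k * g k" if "k \<ge> 1" for k
    proof -
      have "real (k - 1) = real k - 1" using that by auto
      then show ?thesis by (simp add: b_def algebra_simps power2_eq_square)
    qed
    then have "(\<Sum>k=1..2*n. g k * (b k - b (k - 1))) = (\<Sum>k=1..2*n. 16 * real k * g k)"
      by (intro sum.cong) auto
    then show ?thesis by (simp add: b_def)
  qed
  finally show ?thesis .
qed

definition pair_weight :: "nat \<Rightarrow> nat \<Rightarrow> real" where
  "pair_weight x y = 1 / (real x ^ 2 * real y ^ 2 * real (max x y) ^ 2)"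

lemma pair_weight_nonneg: "pair_weight x y \<ge> 0"
  by (simp add: pair_weight_def)

lemma pair_weight_commute: "pair_weight x y = pair_weight y x"
  by (simp add: pair_weight_def max.commute mult_ac)

lemma pair_weight_0 [simp]: "pair_weight 0 y = 0"
  by (simp add: pair_weight_def)

lemma inverse_square_product_le_pair_weight:
  assumes "max x y \<le> z"
  shows "1 / real x ^ 2 * (1 / real y ^ 2) * (1 / real z ^ 2) \<le> pair_weight x y"
proof (cases "x = 0 \<or> y = 0")
  case False
  have "real (max x y) ^ 2 \<le> real z ^ 2" using assms by (intro power_mono) auto
  with False show ?thesis
    unfolding pair_weight_def by (simp add: frac_le mult_left_mono flip: divide_divide_eq_left)
qed (auto simp: pair_weight_def)

text \<open>The largest of the three distances dominates, which removes one inverse square.\<close>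
lemma inverse_square_product_le_pair_weights:
  "1 / real x ^ 2 * (1 / real y ^ 2) * (1 / real z ^ 2)
     \<le> pair_weight x y + pair_weight y z + pair_weight z x"
proof -
  have nonneg: "pair_weight x y \<ge> 0" "pair_weight y z \<ge> 0" "pair_weight z x \<ge> 0"
    by (simp_all add: pair_weight_nonneg)
  consider "max x y \<le> z" | "max y z \<le> x" | "max z x \<le> y" by linarith
  then show ?thesis
  proof cases
    case 1 then show ?thesis
      using inverse_square_product_le_pair_weight[of x y z] nonneg by linarith
  next
    case 2 then show ?thesis
      using inverse_square_product_le_pair_weight[of y z x] nonneg by (simp add: mult_ac)
  next
    case 3 then show ?thesis
      using inverse_square_product_le_pair_weight[of z x y] nonneg by (simp add: mult_ac)
  qed
qed

definition inverse_max_sum :: "nat \<Rightarrow> nat \<Rightarrow> real" where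
  "inverse_max_sum N x = (\<Sum>k=1..N. 1 / (real k * real (max x k) ^ 2))"

definition pair_weight_bound :: "nat \<Rightarrow> nat \<Rightarrow> real" where
  "pair_weight_bound N x = 1 / real x ^ 2 * (1 / real x ^ 2 + 16 * inverse_max_sum N x)"

lemma inverse_max_sum_nonneg: "inverse_max_sum N x \<ge> 0"
  unfolding inverse_max_sum_def by (intro sum_nonneg) auto

lemma inverse_max_sum_antimono: "inverse_max_sum N (Suc x) \<le> inverse_max_sum N x"
  unfolding inverse_max_sum_def
proof (intro sum_mono)
  fix k assume "k \<in> {1..N}"
  moreover have "real (max x k) ^ 2 \<le> real (max (Suc x) k) ^ 2" by (intro power_mono) auto
  ultimately show "1 / (real k * real (max (Suc x) k) ^ 2) \<le> 1 / (real k * real (max x k) ^ 2)"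
    by (intro frac_le mult_left_mono mult_pos_pos) auto
qed

lemma pair_weight_bound_nonneg: "pair_weight_bound N x \<ge> 0"
  unfolding pair_weight_bound_def using inverse_max_sum_nonneg by simp

lemma pair_weight_bound_antimono:
  assumes "1 \<le> x" shows "pair_weight_bound N (Suc x) \<le> pair_weight_bound N x"
proof -
  have "1 / real (Suc x) ^ 2 \<le> 1 / real x ^ 2" using assms by (intro frac_le power_mono) auto
  with inverse_max_sum_antimono[of N x] inverse_max_sum_nonneg[of N]
  show ?thesis unfolding pair_weight_bound_def by (intro mult_mono add_mono) auto
qed

lemma sum_pair_weight_le:
  assumes c: "c \<in> octV n" and "x \<ge> 1"
  shows "(\<Sum>r\<in>octV n. pair_weight x (linf_dist c r)) \<le> pair_weight_bound (2 * n) x"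
proof -
  define g where "g k = 1 / (real k ^ 2 * real (max x k) ^ 2)" for k
  have antimono: "g (Suc k) \<le> g k" if "1 \<le> k" for k
  proof -
    have "real k ^ 2 * real (max x k) ^ 2 \<le> real (Suc k) ^ 2 * real (max x (Suc k)) ^ 2"
      by (intro mult_mono power_mono) auto
    with that \<open>x \<ge> 1\<close> show ?thesis unfolding g_def by (intro frac_le) auto
  qed
  have "(\<Sum>r\<in>octV n. pair_weight x (linf_dist c r)) = 1 / real x ^ 2 * (\<Sum>r\<in>octV n. g (linf_dist c r))"
    by (simp add: pair_weight_def g_def sum_distrib_left mult.assoc)
  also have "\<dots> \<le> 1 / real x ^ 2 * (g 1 + (\<Sum>k=1..2*n. 16 * real k * g k))"
    by (intro mult_left_mono sum_octV_linf_dist_le[OF c] antimono) (simp_all add: g_def)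
  also have "g 1 + (\<Sum>k=1..2*n. 16 * real k * g k) = 1 / real x ^ 2 + 16 * inverse_max_sum (2 * n) x"
    using \<open>x \<ge> 1\<close> by (simp add: g_def inverse_max_sum_def max_def sum_distrib_left power2_eq_square)
  finally show ?thesis unfolding pair_weight_bound_def .
qed

text \<open>Both ways of chaining two pair weights through the center \<open>c\<close> that occur in the
  triangle sum: \<open>center\<close> is either the identity or constantly \<open>c\<close>.\<close>
lemma sum_sum_pair_weight_le:
  assumes c: "c \<in> octV n" and center: "\<And>q. q \<in> octV n \<Longrightarrow> center q \<in> octV n"
  shows "(\<Sum>q\<in>octV n. \<Sum>r\<in>octV n. pair_weight (linf_dist c q) (linf_dist (center q) r))
    \<le> pair_weight_bound (2 * n) 1 + (\<Sum>k=1..2*n. 16 * real k * pair_weight_bound (2 * n) k)"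
proof -
  have "(\<Sum>r\<in>octV n. pair_weight (linf_dist c q) (linf_dist (center q) r))
      \<le> pair_weight_bound (2 * n) (linf_dist c q)" if "q \<in> octV n" for q
  proof (cases "linf_dist c q = 0")
    case False
    then show ?thesis using sum_pair_weight_le[OF center[OF that]] by simp
  qed (simp add: pair_weight_bound_def)
  then have "(\<Sum>q\<in>octV n. \<Sum>r\<in>octV n. pair_weight (linf_dist c q) (linf_dist (center q) r))
      \<le> (\<Sum>q\<in>octV n. pair_weight_bound (2 * n) (linf_dist c q))"
    by (rule sum_mono)
  also have "\<dots> \<le> pair_weight_bound (2 * n) 1 + (\<Sum>k=1..2*n. 16 * real k * pair_weight_bound (2 * n) k)"
    by (rule sum_octV_linf_dist_le[OF c])
      (simp_all add: pair_weight_bound_antimono pair_weight_bound_nonneg pair_weight_bound_def[of _ 0])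
  finally show ?thesis .
qed

lemma pair_weight_bound_total_le:
  "pair_weight_bound N 1 + (\<Sum>k=1..N. 16 * real k * pair_weight_bound N k) \<le> 470"
proof -
  have at_1: "inverse_max_sum N 1 = (\<Sum>k=1..N. 1 / real k ^ 3)"
    unfolding inverse_max_sum_def by (intro sum.cong refl) (auto simp: max_def power_def)
  have "(\<Sum>k=1..N. 16 * real k * pair_weight_bound N k)
      = (\<Sum>k=1..N. 16 * (1 / real k ^ 3) + 256 * (inverse_max_sum N k / real k))"
    unfolding pair_weight_bound_def by (intro sum.cong refl) (auto simp: field_simps power_def)
  also have "\<dots> = 16 * (\<Sum>k=1..N. 1 / real k ^ 3)
      + 256 * (\<Sum>x=1..N. \<Sum>k=1..N. 1 / (real x * real k * real (max x k) ^ 2))"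
    by (simp add: sum.distrib sum_distrib_left inverse_max_sum_def sum_divide_distrib mult_ac)
  finally show ?thesis
    using at_1 sum_inverse_cube_le[of N] sum_inverse_max_square_le[of N]
    by (simp add: pair_weight_bound_def)
qed

lemma triangle_weight_sum_le:
  assumes u: "u \<in> octV n"
  shows "(\<Sum>a\<in>octV n - {u}. \<Sum>b\<in>octV n - {u, a}. triangle_weight u a b) \<le> 1410"
proof -
  let ?K = "pair_weight_bound (2 * n) 1 + (\<Sum>k=1..2*n. 16 * real k * pair_weight_bound (2 * n) k)"
  define H where "H a b = pair_weight (linf_dist u a) (linf_dist a b)
    + pair_weight (linf_dist a b) (linf_dist b u) + pair_weight (linf_dist b u) (linf_dist u a)" for a b
  have H_nonneg: "H a b \<ge> 0" for a b by (simp add: H_def pair_weight_nonneg add_nonneg_nonneg)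
  have "(\<Sum>a\<in>octV n - {u}. \<Sum>b\<in>octV n - {u, a}. triangle_weight u a b)
      \<le> (\<Sum>a\<in>octV n - {u}. \<Sum>b\<in>octV n - {u, a}. H a b)"
    unfolding triangle_weight_def H_def by (intro sum_mono inverse_square_product_le_pair_weights)
  also have "\<dots> \<le> (\<Sum>a\<in>octV n - {u}. \<Sum>b\<in>octV n. H a b)"
    using finite_octV H_nonneg by (intro sum_mono sum_mono2) (auto simp del: octV_mem)
  also have "\<dots> \<le> (\<Sum>a\<in>octV n. \<Sum>b\<in>octV n. H a b)"
    using finite_octV H_nonneg by (intro sum_mono2 sum_nonneg) auto
  also have "\<dots> = (\<Sum>a\<in>octV n. \<Sum>b\<in>octV n. pair_weight (linf_dist u a) (linf_dist a b))
      + (\<Sum>a\<in>octV n. \<Sum>b\<in>octV n. pair_weight (linf_dist a b) (linf_dist b u))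
      + (\<Sum>a\<in>octV n. \<Sum>b\<in>octV n. pair_weight (linf_dist b u) (linf_dist u a))"
    by (simp add: H_def sum.distrib)
  also have "(\<Sum>a\<in>octV n. \<Sum>b\<in>octV n. pair_weight (linf_dist a b) (linf_dist b u))
      = (\<Sum>b\<in>octV n. \<Sum>a\<in>octV n. pair_weight (linf_dist u b) (linf_dist b a))"
    by (subst sum.swap) (simp add: pair_weight_commute linf_dist_commute)
  also have "(\<Sum>a\<in>octV n. \<Sum>b\<in>octV n. pair_weight (linf_dist b u) (linf_dist u a))
      = (\<Sum>a\<in>octV n. \<Sum>b\<in>octV n. pair_weight (linf_dist u a) (linf_dist u b))"
    by (simp add: pair_weight_commute linf_dist_commute)
  also have "(\<Sum>a\<in>octV n. \<Sum>b\<in>octV n. pair_weight (linf_dist u a) (linf_dist a b))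
      + (\<Sum>b\<in>octV n. \<Sum>a\<in>octV n. pair_weight (linf_dist u b) (linf_dist b a))
      + (\<Sum>a\<in>octV n. \<Sum>b\<in>octV n. pair_weight (linf_dist u a) (linf_dist u b)) \<le> ?K + ?K + ?K"
    using sum_sum_pair_weight_le[OF u, of id] sum_sum_pair_weight_le[OF u, of "\<lambda>_. u"] u
    by (intro add_mono) auto
  also have "\<dots> \<le> 1410" using pair_weight_bound_total_le[of "2 * n"] by simp
  finally show ?thesis .
qed

section \<open>The probability of a long-range triangle\<close>

lemma prob_E7_le:
  assumes "n \<ge> 1" and "u \<in> octV n"
  shows "measure_pmf.prob (OSW_space n) (E7 n u) \<le> 1410 / (ln (real n + 1) + 1 / 2) ^ 3"
proof -
  have "ln (real n + 1) \<ge> 0" by simp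
  then have "(1 / (ln (real n + 1) + 1 / 2)) ^ 3 * (\<Sum>a\<in>octV n - {u}. \<Sum>b\<in>octV n - {u, a}. triangle_weight u a b)
      \<le> (1 / (ln (real n + 1) + 1 / 2)) ^ 3 * 1410"
    using triangle_weight_sum_le[OF assms(2)] by (intro mult_left_mono) auto
  with prob_E7_le_triangle_sum[OF assms(2,1)] show ?thesis by (simp add: power_divide)
qed

lemma zeta3_constant_ge: "36 * (3 * (\<Sum>i. 1 / (real (Suc i)) ^ 3) + 1 / 8) \<ge> 131"
proof -
  have "summable (\<lambda>i. inverse (real i ^ 3))" by (rule inverse_power_summable) simp
  then have "summable (\<lambda>i. 1 / (real (Suc i)) ^ 3)"
    by (subst summable_Suc_iff) (simp add: inverse_eq_divide)
  then have "(\<Sum>i<4. 1 / (real (Suc i)) ^ 3) \<le> (\<Sum>i. 1 / (real (Suc i)) ^ 3)"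
    by (rule sum_le_suminf) auto
  then show ?thesis by (simp add: eval_nat_numeral)
qed

text \<open>Neither bound on \<open>p\<close> suffices alone: \<open>p \<le> 1\<close> handles \<open>t \<le> 11\<close> and the cubic bound the rest.\<close>
lemma less_131_div_square:
  fixes p t :: real
  assumes "t > 0" "p \<le> 1" "p \<le> 1410 / (t + 1 / 2) ^ 3"
  shows "p < 131 / t\<^sup>2"
proof (cases "t \<le> 11")
  case True
  then have "t\<^sup>2 \<le> 11\<^sup>2" using \<open>t > 0\<close> by (intro power_mono) auto
  then have "131 / 121 \<le> 131 / t\<^sup>2" using \<open>t > 0\<close> by (intro divide_left_mono) auto
  with \<open>p \<le> 1\<close> show ?thesis by linarith
next
  case False
  have "(t + 1 / 2) ^ 3 \<ge> t ^ 3 + 3 / 2 * t\<^sup>2"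
    using \<open>t > 0\<close> by (simp add: power3_eq_cube power2_eq_square algebra_simps)
  moreover have "t ^ 3 \<ge> 11 * t\<^sup>2" using False \<open>t > 0\<close> by (simp add: power3_eq_cube power2_eq_square)
  moreover have "t\<^sup>2 > 0" using \<open>t > 0\<close> by simp
  ultimately have "1410 * t\<^sup>2 < 131 * (t + 1 / 2) ^ 3" by linarith
  then have "1410 / (t + 1 / 2) ^ 3 < 131 / t\<^sup>2" using \<open>t > 0\<close> by (simp add: field_simps)
  with \<open>p \<le> 1410 / (t + 1 / 2) ^ 3\<close> show ?thesis by linarith
qed

theorem lemma11:
  fixes n :: nat and u :: vtx
  assumes "n \<ge> 1" and "u \<in> octV n"
  shows "measure_pmf.prob (OSW_space n) (E7 n u)
         < 36 * (3 * (\<Sum>i. 1 / (real (Suc i)) ^ 3) + 1 / 8)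
              * ln (2 * real n) / (ln (real n + 1)) ^ 3"
proof -
  define t where "t = ln (real n + 1)"
  have t: "0 < t" "t \<le> ln (2 * real n)" unfolding t_def using assms(1) by simp_all
  have "measure_pmf.prob (OSW_space n) (E7 n u) < 131 / t\<^sup>2"
    using t prob_E7_le[OF assms] by (intro less_131_div_square) (simp_all add: t_def)
  also have "\<dots> = 131 * t / t ^ 3" using t by (simp add: power2_eq_square power3_eq_cube)
  also have "\<dots> \<le> 36 * (3 * (\<Sum>i. 1 / (real (Suc i)) ^ 3) + 1 / 8) * ln (2 * real n) / t ^ 3"
    using t zeta3_constant_ge by (intro divide_right_mono mult_mono) auto
  finally show ?thesis unfolding t_def .
qed

end
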